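(* Let $X,Y$ be Banach spaces, $F:D(F)\subseteq X\to Y$ a weakly sequentially continuous (nonlinear) operator whose domain $D(F)$ is closed and convex, and let $y\in Y$ be such that $F(x)=y$ has a unique solution $x^\dagger\in D(F)$. Let $V$ be a Banach space continuously embedded in $X$, with strictly finer topology, such that sub-level sets of $\|\cdot\|_V^m$ are weakly sequentially pre-compact in $X$. Fix $\nu,m\ge1$, $\delta_{\max}>0$ (sufficiently small) and $C_{DP}>1$. For $\delta\in(0,\delta_{\max}]$ and $y^\delta\in Y$ with $\|y^\delta-y\|_Y\le\delta$, consider minimizers over $D(F)\cap V$ of $T^\delta_\kappa(x)=\|F(x)-y^\delta\|_Y^\nu+\kappa\|x\|_V^m$, and assume that for every such $\delta,y^\delta$ there are $\kappa_{DP}>0$ and a minimizer $x^\delta_{\kappa_{DP}}$ of $T^\delta_{\kappa_{DP}}$ with $\|F(x^\delta_{\kappa_{DP}})-y^\delta\|_Y=C_{DP}\delta$. Assume: (A1) There are a Banach space $U\supsetneq X$ and constants $0<c_U\le C_U<\infty$ with $c_U\|x-x^\dagger\|_U\le\|F(x)-F(x^\dagger)\|_Y\le C_U\|x-x^\dagger\|_U$ for all $x\in D(F)$, and a neighborhood $B^\dagger\subset X$ of $x^\dagger$ such that $F$ is continuous on $B^\dagger\cap D(F)$. (A2) There are a family of Banach spaces $\{X_s\}_{s\in[0,1]}$, a number $t_0\in(0,\infty)$ and operators $\{P_t\}_{0<t\le t_0}\subset B(U)$ such that: (i) the embeddings $V\hookrightarrow X\hookrightarrow U$ are continuous; (ii)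 $X_0=X$, $X_1=V$, and $X_s\hookrightarrow X_t$ continuously for $0\le t\le s\le1$; (iii) there is $a\ge0$ such that for all $s\in(0,1]$ and $r\in[0,s)$ there is $L>0$ with $\|x\|_{X_r}\le L\|x\|_{X_s}^{\frac{r+a}{a+s}}\|x\|_U^{\frac{s-r}{a+s}}$ for all $x\in X_s$; (iv) for all $s\in[0,1]$ and $t\in(0,t_0]$, $P_tX_s\subset X_s$ and $C_P:=\sup_{0<t\le t_0}\|P_t\|_{X_s\to X_s}<\infty$, and for every $x\in X$ the map $t\mapsto P_tx$ is continuous from $(0,t_0]$ into $X$; (v) for every $0<s<1$ there is $C_{Proj}\ge C_P+1$ such that for all $0<t\le t_0$: $\|P_t-\mathrm{id}\|_{X_s\to U}\le C_{Proj}t^{a+s}$ and $\|P_t\|_{X_s\to V}\le C_{Proj}t^{s-1}$, with $a$ as in (iii). (A3) There are $\theta\in(0,1)$ and $E>0$ with $x^\dagger\in X_\theta$ and $\|x^\dagger\|_{X_\theta}\le E$, and either $x^\dagger$ is an interior point of $D(F)$ or $P_tx^\dagger\in D(F)$ for all $0<t\le t_0$. Then there is a constant $c>0$, independent of $\delta$, such that $\|x^\delta_{\kappa_{DP}}-x^\dagger\|_X\le c\,\delta^{\frac{\theta}{a+\theta}}$ for all sufficiently small $\delta$. *)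

theory Defs
  imports "HOL-Analysis.Analysis"
begin

text \<open>A Banach space (S, n) realised as a linear subspace S of an ambient real
vector space, equipped with its own norm n (only values on S matter) and complete
with respect to n.\<close>
definition banach_sub :: "'a::real_vector set \<Rightarrow> ('a \<Rightarrow> real) \<Rightarrow> bool" where
  "banach_sub S n \<longleftrightarrow>
     subspace S \<and>
     (\<forall>x\<in>S. 0 \<le> n x) \<and>
     (\<forall>x\<in>S. n x = 0 \<longleftrightarrow> x = 0) \<and>
     (\<forall>x\<in>S. \<forall>y\<in>S. n (x + y) \<le> n x + n y) \<and>
     (\<forall>c. \<forall>x\<in>S. n (c *\<^sub>R x) = \<bar>c\<bar> * n x) \<and>
     (\<forall>xs. (\<forall>k. xs k \<in> S) \<and>
           (\<forall>e>0. \<exists>N. \<forall>i\<ge>N. \<forall>j\<ge>N. n (xs i - xs j) < e)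
           \<longrightarrow> (\<exists>x\<in>S. (\<lambda>k. n (xs k - x)) \<longlonglongrightarrow> 0))"

definition cont_embed :: "'a::real_vector set \<Rightarrow> ('a \<Rightarrow> real) \<Rightarrow> 'a set \<Rightarrow> ('a \<Rightarrow> real) \<Rightarrow> bool" where
  "cont_embed S nS T nT \<longleftrightarrow> S \<subseteq> T \<and> (\<exists>c. \<forall>x\<in>S. nT x \<le> c * nS x)"

definition bdd_lin_functional :: "'a::real_vector set \<Rightarrow> ('a \<Rightarrow> real) \<Rightarrow> ('a \<Rightarrow> real) \<Rightarrow> bool" where
  "bdd_lin_functional S n f \<longleftrightarrow>
     (\<forall>x\<in>S. \<forall>y\<in>S. f (x + y) = f x + f y) \<and>
     (\<forall>c. \<forall>x\<in>S. f (c *\<^sub>R x) = c * f x) \<and>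
     (\<exists>C. \<forall>x\<in>S. \<bar>f x\<bar> \<le> C * n x)"

definition weak_conv :: "'a::real_vector set \<Rightarrow> ('a \<Rightarrow> real) \<Rightarrow> (nat \<Rightarrow> 'a) \<Rightarrow> 'a \<Rightarrow> bool" where
  "weak_conv S n xs x \<longleftrightarrow>
     (\<forall>f. bdd_lin_functional S n f \<longrightarrow> (\<lambda>k. f (xs k)) \<longlonglongrightarrow> f x)"

definition weak_conv_Y :: "(nat \<Rightarrow> 'b::real_normed_vector) \<Rightarrow> 'b \<Rightarrow> bool" where
  "weak_conv_Y ys y \<longleftrightarrow> (\<forall>f::'b \<Rightarrow> real. bounded_linear f \<longrightarrow> (\<lambda>k. f (ys k)) \<longlonglongrightarrow> f y)"

definition weakly_seq_cont :: "'a::real_vector set \<Rightarrow> ('a \<Rightarrow> real) \<Rightarrow> 'a set \<Rightarrow> ('a \<Rightarrow> 'b::real_normed_vector) \<Rightarrow> bool" where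
  "weakly_seq_cont X nX D F \<longleftrightarrow>
     (\<forall>xs x. (\<forall>k. xs k \<in> D) \<and> x \<in> D \<and> weak_conv X nX xs x
            \<longrightarrow> weak_conv_Y (\<lambda>k. F (xs k)) (F x))"

definition closed_in_norm :: "'a::real_vector set \<Rightarrow> ('a \<Rightarrow> real) \<Rightarrow> 'a set \<Rightarrow> bool" where
  "closed_in_norm X nX D \<longleftrightarrow>
     D \<subseteq> X \<and> (\<forall>xs x. (\<forall>k. xs k \<in> D) \<and> x \<in> X \<and> (\<lambda>k. nX (xs k - x)) \<longlonglongrightarrow> 0 \<longrightarrow> x \<in> D)"

definition open_in_norm :: "'a::real_vector set \<Rightarrow> ('a \<Rightarrow> real) \<Rightarrow> 'a set \<Rightarrow> bool" where
  "open_in_norm X nX B \<longleftrightarrow>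
     B \<subseteq> X \<and> (\<forall>x\<in>B. \<exists>r>0. \<forall>z\<in>X. nX (z - x) < r \<longrightarrow> z \<in> B)"

definition interior_pt :: "'a::real_vector set \<Rightarrow> ('a \<Rightarrow> real) \<Rightarrow> 'a set \<Rightarrow> 'a \<Rightarrow> bool" where
  "interior_pt X nX D x \<longleftrightarrow> x \<in> D \<and> (\<exists>r>0. \<forall>z\<in>X. nX (z - x) < r \<longrightarrow> z \<in> D)"

definition cont_on_norm :: "('a::real_vector \<Rightarrow> real) \<Rightarrow> 'a set \<Rightarrow> ('a \<Rightarrow> 'b::real_normed_vector) \<Rightarrow> bool" where
  "cont_on_norm nX A F \<longleftrightarrow>
     (\<forall>x\<in>A. \<forall>e>0. \<exists>d>0. \<forall>z\<in>A. nX (z - x) < d \<longrightarrow> norm (F z - F x) < e)"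

definition tik :: "('a \<Rightarrow> 'b::real_normed_vector) \<Rightarrow> ('a \<Rightarrow> real) \<Rightarrow> real \<Rightarrow> real \<Rightarrow> 'b \<Rightarrow> real \<Rightarrow> 'a \<Rightarrow> real" where
  "tik F nV \<nu> m yd \<kappa> x = norm (F x - yd) powr \<nu> + \<kappa> * nV x powr m"

definition is_tik_minimizer :: "('a \<Rightarrow> 'b::real_normed_vector) \<Rightarrow> 'a set \<Rightarrow> 'a set \<Rightarrow> ('a \<Rightarrow> real) \<Rightarrow> real \<Rightarrow> real \<Rightarrow> 'b \<Rightarrow> real \<Rightarrow> 'a \<Rightarrow> bool" where
  "is_tik_minimizer F D V nV \<nu> m yd \<kappa> x \<longleftrightarrow>
     x \<in> D \<inter> V \<and> (\<forall>z\<in>D \<inter> V. tik F nV \<nu> m yd \<kappa> x \<le> tik F nV \<nu> m yd \<kappa> z)"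

definition CP_const :: "(real \<Rightarrow> 'a set) \<Rightarrow> (real \<Rightarrow> 'a \<Rightarrow> real) \<Rightarrow> (real \<Rightarrow> 'a \<Rightarrow> 'a) \<Rightarrow> real \<Rightarrow> real \<Rightarrow> real" where
  "CP_const XS NS P t0 s = Sup {NS s (P t x) | t x. t \<in> {0<..t0} \<and> x \<in> XS s \<and> NS s x \<le> 1}"

end

theory Submission
  imports Defs
begin

(*
  Compare the discrepancy-principle minimizer x with z = P_t x', where x' is the exact solution
  and t^(a+theta) is proportional to delta. The Jackson estimate (A2 v) gives
  |z - x'|_U <= (C_DP - 1) delta / C_U, so by (A1) z fits the noisy data no worse than x, and
  minimality of the Tikhonov functional yields |x|_V <= |z|_V = O(t^(theta-1)). Hence x - z is
  O(t^(theta-1)) in V and O(delta) = O(t^(a+theta)) in U, while z - x' is bounded in X_theta and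
  O(t^(a+theta)) in U. The interpolation inequality (A2 iii) turns both into O(t^theta) in X,
  that is O(delta^(theta/(a+theta))). In the interior-point case of (A3) the same bound on
  |z - x'|_X shows that z lies in D(F) once t is small.
*)

lemma banach_subD:
  assumes "banach_sub S n"
  shows banach_sub_nonneg: "x \<in> S \<Longrightarrow> 0 \<le> n x"
    and banach_sub_eq_0_iff: "x \<in> S \<Longrightarrow> n x = 0 \<longleftrightarrow> x = 0"
    and banach_sub_zero_mem: "0 \<in> S"
    and banach_sub_zero: "n 0 = 0"
    and banach_sub_diff: "x \<in> S \<Longrightarrow> y \<in> S \<Longrightarrow> x - y \<in> S"
    and banach_sub_scale: "x \<in> S \<Longrightarrow> c *\<^sub>R x \<in> S"
    and banach_sub_homogeneous: "x \<in> S \<Longrightarrow> n (c *\<^sub>R x) = \<bar>c\<bar> * n x"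
    and banach_sub_triangle: "x \<in> S \<Longrightarrow> y \<in> S \<Longrightarrow> n (x + y) \<le> n x + n y"
    and banach_sub_triangle_diff: "x \<in> S \<Longrightarrow> y \<in> S \<Longrightarrow> n (x - y) \<le> n x + n y"
proof -
  have sub: "subspace S" and nonneg: "\<And>x. x \<in> S \<Longrightarrow> 0 \<le> n x"
    and eq_0: "\<And>x. x \<in> S \<Longrightarrow> n x = 0 \<longleftrightarrow> x = 0"
    and tri: "\<And>x y. x \<in> S \<Longrightarrow> y \<in> S \<Longrightarrow> n (x + y) \<le> n x + n y"
    and hom: "\<And>c x. x \<in> S \<Longrightarrow> n (c *\<^sub>R x) = \<bar>c\<bar> * n x"
    using assms unfolding banach_sub_def by simp_all
  show "0 \<in> S" using sub by (rule subspace_0)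
  then show "n 0 = 0" using eq_0 by simp
  show "x \<in> S \<Longrightarrow> 0 \<le> n x" by (rule nonneg)
  show "x \<in> S \<Longrightarrow> n x = 0 \<longleftrightarrow> x = 0" by (rule eq_0)
  show "x \<in> S \<Longrightarrow> y \<in> S \<Longrightarrow> n (x + y) \<le> n x + n y" by (rule tri)
  show "x \<in> S \<Longrightarrow> n (c *\<^sub>R x) = \<bar>c\<bar> * n x" by (rule hom)
  show "x \<in> S \<Longrightarrow> y \<in> S \<Longrightarrow> x - y \<in> S" "x \<in> S \<Longrightarrow> c *\<^sub>R x \<in> S"
    using sub by (simp_all add: subspace_diff subspace_scale)
  show "n (x - y) \<le> n x + n y" if "x \<in> S" "y \<in> S"
    using tri[of x "(-1) *\<^sub>R y"] hom[of y "-1"] subspace_scale[OF sub, of y "-1"] that by simp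
qed

lemma interpolation_rate:
  fixes a s \<theta> t L A B n0 ns nu :: real
  assumes "0 \<le> a" "0 < s" "0 < t" "0 \<le> L"
    and interp: "n0 \<le> L * ns powr (a / (a + s)) * nu powr (s / (a + s))"
    and ns: "0 \<le> ns" "ns \<le> A * t powr (\<theta> - s)"
    and nu: "0 \<le> nu" "nu \<le> B * t powr (a + \<theta>)"
  shows "n0 \<le> L * A powr (a / (a + s)) * B powr (s / (a + s)) * t powr \<theta>"
proof -
  define p q where "p = a / (a + s)" and "q = s / (a + s)"
  have pq: "0 \<le> p" "0 \<le> q" using assms(1,2) by (simp_all add: p_def q_def)
  have scaled: "u powr r \<le> C powr r * t powr (e * r)"
    if "0 \<le> u" "u \<le> C * t powr e" "0 \<le> r" for u C e r
  proof -
    have "u powr r \<le> (C * t powr e) powr r" using that by (intro powr_mono2) auto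
    then show ?thesis by (simp add: powr_mult powr_powr)
  qed
  have "0 < a + s" using assms(1,2) by simp
  have "(\<theta> - s) * p + (a + \<theta>) * q = ((\<theta> - s) * a + (a + \<theta>) * s) / (a + s)"
    by (simp add: p_def q_def add_divide_distrib)
  also have "\<dots> = \<theta>"
    using \<open>0 < a + s\<close> by (simp add: field_simps)
  finally have exponents: "(\<theta> - s) * p + (a + \<theta>) * q = \<theta>" .
  have "ns powr p * nu powr q
      \<le> (A powr p * t powr ((\<theta> - s) * p)) * (B powr q * t powr ((a + \<theta>) * q))"
    using scaled[OF ns pq(1)] scaled[OF nu pq(2)] by (rule mult_mono) simp_all
  also have "\<dots> = A powr p * B powr q * t powr ((\<theta> - s) * p + (a + \<theta>) * q)"
    by (simp add: powr_add)
  also have "\<dots> = A powr p * B powr q * t powr \<theta>"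
    by (simp only: exponents)
  finally have "L * (ns powr p * nu powr q) \<le> L * (A powr p * B powr q * t powr \<theta>)"
    using \<open>0 \<le> L\<close> by (rule mult_left_mono)
  then show ?thesis using interp by (simp add: p_def q_def mult.assoc)
qed

lemma CP_const_nonneg:
  assumes S: "banach_sub (XS s) (NS s)"
    and bdd: "bdd_above {NS s (P t x) |t x. t \<in> {0<..t0} \<and> x \<in> XS s \<and> NS s x \<le> 1}"
    and "0 < t0" "linear (P t0)"
  shows "0 \<le> CP_const XS NS P t0 s"
proof -
  have zero: "NS s (P t0 0) = 0"
    using banach_sub_zero[OF S] linear_0[OF \<open>linear (P t0)\<close>] by simp
  have "NS s (P t0 0) \<in> {NS s (P t x) |t x. t \<in> {0<..t0} \<and> x \<in> XS s \<and> NS s x \<le> 1}"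
    unfolding mem_Collect_eq using \<open>0 < t0\<close> banach_sub_zero_mem[OF S] banach_sub_zero[OF S]
    by (intro exI[of _ t0] exI[of _ 0]) simp
  then have "NS s (P t0 0) \<le> CP_const XS NS P t0 s"
    unfolding CP_const_def by (rule cSup_upper[OF _ bdd])
  then show ?thesis by (simp only: zero)
qed

lemma CP_const_bound:
  assumes S: "banach_sub (XS s) (NS s)"
    and bdd: "bdd_above {NS s (P t x) |t x. t \<in> {0<..t0} \<and> x \<in> XS s \<and> NS s x \<le> 1}"
    and t: "t \<in> {0<..t0}" and lin: "linear (P t)" and inv: "P t ` XS s \<subseteq> XS s"
    and x: "x \<in> XS s"
  shows "NS s (P t x) \<le> CP_const XS NS P t0 s * NS s x"
proof (cases "NS s x = 0")
  case True
  then have "x = 0" using banach_sub_eq_0_iff[OF S x] by simp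
  then show ?thesis using banach_sub_zero[OF S] lin by (simp add: linear_0)
next
  case False
  then have pos: "0 < NS s x" using banach_sub_nonneg[OF S x] by simp
  define u where "u = (1 / NS s x) *\<^sub>R x"
  have u: "u \<in> XS s" "NS s u = 1"
    using pos banach_sub_scale[OF S x] banach_sub_homogeneous[OF S x] by (simp_all add: u_def)
  then have "NS s (P t u) \<in> {NS s (P t x) |t x. t \<in> {0<..t0} \<and> x \<in> XS s \<and> NS s x \<le> 1}"
    unfolding mem_Collect_eq using t by (intro exI[of _ t] exI[of _ u]) simp
  then have "NS s (P t u) \<le> CP_const XS NS P t0 s"
    unfolding CP_const_def by (rule cSup_upper[OF _ bdd])
  moreover have "NS s (P t u) = NS s (P t x) / NS s x"
  proof -
    have "P t u = (1 / NS s x) *\<^sub>R P t x" by (simp add: u_def linear_scale[OF lin])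
    moreover have "P t x \<in> XS s" using inv x by blast
    ultimately show ?thesis using pos banach_sub_homogeneous[OF S] by simp
  qed
  ultimately show ?thesis using pos by (simp add: field_simps)
qed

lemma approximation_error_rate:
  fixes a \<theta> t L CP CProj E :: real
  assumes S: "banach_sub S nS" and x: "x \<in> S" "nS x \<le> E"
    and "0 \<le> a" "0 < \<theta>" "0 < t" "0 \<le> L" "0 \<le> CP" and CProj: "CP + 1 \<le> CProj"
    and Px: "Px \<in> S" and stable: "nS Px \<le> CP * nS x"
    and jackson: "norm (Px - x) \<le> CProj * t powr (a + \<theta>) * nS x"
    and interp: "\<And>w. w \<in> S \<Longrightarrow> n0 w \<le> L * nS w powr (a / (a + \<theta>)) * norm w powr (\<theta> / (a + \<theta>))"
  shows "n0 (Px - x) \<le> L * CProj * E * t powr \<theta>"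
proof -
  have "0 \<le> nS x" using banach_sub_nonneg[OF S x(1)] .
  have "0 \<le> CProj" using \<open>0 \<le> CP\<close> CProj by simp
  have diff: "Px - x \<in> S" using banach_sub_diff[OF S Px x(1)] .
  \<comment> \<open>The exponent \<open>\<theta> - \<theta>\<close> is \<open>interpolation_rate\<close>'s \<open>\<theta> - s\<close> at \<open>s = \<theta>\<close>.\<close>
  have "nS (Px - x) \<le> (CP + 1) * nS x"
    using banach_sub_triangle_diff[OF S Px x(1)] stable by (simp add: algebra_simps)
  also have "\<dots> \<le> (CProj * E) * t powr (\<theta> - \<theta>)"
    using CProj x(2) \<open>0 \<le> nS x\<close> \<open>0 \<le> CProj\<close> \<open>0 < t\<close> by (simp add: mult_mono)
  finally have smooth: "nS (Px - x) \<le> (CProj * E) * t powr (\<theta> - \<theta>)" .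
  have "CProj * t powr (a + \<theta>) * nS x \<le> CProj * t powr (a + \<theta>) * E"
    using x(2) \<open>0 \<le> CProj\<close> by (intro mult_left_mono) simp_all
  then have rough: "norm (Px - x) \<le> (CProj * E) * t powr (a + \<theta>)"
    using jackson by (simp add: algebra_simps)
  have "n0 (Px - x) \<le> L * (CProj * E) powr (a / (a + \<theta>)) * (CProj * E) powr (\<theta> / (a + \<theta>)) * t powr \<theta>"
    by (rule interpolation_rate[OF _ _ _ _ interp[OF diff] _ smooth _ rough])
      (simp_all add: \<open>0 \<le> a\<close> \<open>0 < \<theta>\<close> \<open>0 < t\<close> \<open>0 \<le> L\<close> banach_sub_nonneg[OF S diff])
  also have "\<dots> = L * ((CProj * E) powr (a / (a + \<theta>)) * (CProj * E) powr (\<theta> / (a + \<theta>))) * t powr \<theta>"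
    by (simp only: mult.assoc)
  also have "(CProj * E) powr (a / (a + \<theta>)) * (CProj * E) powr (\<theta> / (a + \<theta>)) = CProj * E"
  proof -
    have "a / (a + \<theta>) + \<theta> / (a + \<theta>) = 1"
      using \<open>0 \<le> a\<close> \<open>0 < \<theta>\<close> by (metis add_divide_distrib divide_self add_nonneg_pos less_irrefl)
    then have "(CProj * E) powr (a / (a + \<theta>)) * (CProj * E) powr (\<theta> / (a + \<theta>)) = (CProj * E) powr 1"
      by (simp only: powr_add[symmetric])
    then show ?thesis
      using \<open>0 \<le> CProj\<close> x(2) \<open>0 \<le> nS x\<close> by (simp add: powr_one)
  qed
  finally show ?thesis by (simp only: mult.assoc)
qed

lemma source_approximants:
  fixes \<theta> a E t0 :: real
  assumes "0 < \<theta>" "0 \<le> a" "0 < t0" "0 < E"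
    and S: "banach_sub (XS \<theta>) (NS \<theta>)"
    and lin: "\<And>t. t \<in> {0<..t0} \<Longrightarrow> linear (P t)"
    and inv: "\<And>t. t \<in> {0<..t0} \<Longrightarrow> P t ` XS \<theta> \<subseteq> XS \<theta>"
    and bdd: "bdd_above {NS \<theta> (P t x) |t x. t \<in> {0<..t0} \<and> x \<in> XS \<theta> \<and> NS \<theta> x \<le> 1}"
    and interp: "\<exists>L>0. \<forall>w\<in>XS \<theta>. n0 w \<le> L * NS \<theta> w powr (a / (a + \<theta>)) * norm w powr (\<theta> / (a + \<theta>))"
    and jackson: "\<exists>CProj \<ge> CP_const XS NS P t0 \<theta> + 1. \<forall>t\<in>{0<..t0}. \<forall>x\<in>XS \<theta>.
            norm (P t x - x) \<le> CProj * t powr (a + \<theta>) * NS \<theta> x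
            \<and> P t x \<in> V \<and> nV (P t x) \<le> CProj * t powr (\<theta> - 1) * NS \<theta> x"
    and x: "x \<in> XS \<theta>" "NS \<theta> x \<le> E"
  obtains B Cz where "0 < B" "0 \<le> Cz"
    "\<And>t. t \<in> {0<..t0} \<Longrightarrow> P t x \<in> V \<and> nV (P t x) \<le> B * t powr (\<theta> - 1)
       \<and> norm (P t x - x) \<le> B * t powr (a + \<theta>) \<and> n0 (P t x - x) \<le> Cz * t powr \<theta>"
proof -
  obtain CProj where CProj: "CP_const XS NS P t0 \<theta> + 1 \<le> CProj"
    and CProj_bounds: "\<And>t w. t \<in> {0<..t0} \<Longrightarrow> w \<in> XS \<theta> \<Longrightarrow>
         norm (P t w - w) \<le> CProj * t powr (a + \<theta>) * NS \<theta> w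
         \<and> P t w \<in> V \<and> nV (P t w) \<le> CProj * t powr (\<theta> - 1) * NS \<theta> w"
    using jackson by blast
  obtain L where L: "0 < L"
    "\<And>w. w \<in> XS \<theta> \<Longrightarrow> n0 w \<le> L * NS \<theta> w powr (a / (a + \<theta>)) * norm w powr (\<theta> / (a + \<theta>))"
    using interp by blast
  have CP: "0 \<le> CP_const XS NS P t0 \<theta>"
    using CP_const_nonneg[where XS = XS and NS = NS and s = \<theta>, OF S bdd \<open>0 < t0\<close>]
      lin[of t0] \<open>0 < t0\<close> by simp
  have bounds: "P t x \<in> V \<and> nV (P t x) \<le> (CProj * E) * t powr (\<theta> - 1)
      \<and> norm (P t x - x) \<le> (CProj * E) * t powr (a + \<theta>) \<and> n0 (P t x - x) \<le> (L * CProj * E) * t powr \<theta>"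
    if t: "t \<in> {0<..t0}" for t
  proof -
    have "0 \<le> CProj" using CP CProj by simp
    have Px: "P t x \<in> XS \<theta>" using inv[OF t] x(1) by blast
    have jackson_U: "norm (P t x - x) \<le> CProj * t powr (a + \<theta>) * NS \<theta> x"
      and V: "P t x \<in> V" and jackson_V: "nV (P t x) \<le> CProj * t powr (\<theta> - 1) * NS \<theta> x"
      using CProj_bounds[OF t x(1)] by auto
    have "CProj * t powr (\<theta> - 1) * NS \<theta> x \<le> (CProj * E) * t powr (\<theta> - 1)"
      and "CProj * t powr (a + \<theta>) * NS \<theta> x \<le> (CProj * E) * t powr (a + \<theta>)"
      using mult_left_mono[OF x(2), of "CProj * t powr (\<theta> - 1)"]
        mult_left_mono[OF x(2), of "CProj * t powr (a + \<theta>)"] \<open>0 \<le> CProj\<close>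
      by (simp_all add: ac_simps)
    moreover have "n0 (P t x - x) \<le> (L * CProj * E) * t powr \<theta>"
      by (rule approximation_error_rate[OF S x \<open>0 \<le> a\<close> \<open>0 < \<theta>\<close> _ _ CP CProj Px
            CP_const_bound[where XS = XS and NS = NS and s = \<theta>, OF S bdd t lin[OF t] inv[OF t] x(1)]
            jackson_U L(2)])
        (use t L(1) in simp_all)
    ultimately show ?thesis using V jackson_U jackson_V by linarith
  qed
  show ?thesis
    using that[OF _ _ bounds] CP CProj L(1) \<open>0 < E\<close> by simp
qed

lemma tik_minimizer_norm_le:
  assumes V: "banach_sub V nV" and min: "is_tik_minimizer F D V nV \<nu> m yd \<kappa> x"
    and z: "z \<in> D" "z \<in> V" and fit: "norm (F z - yd) \<le> norm (F x - yd)"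
    and "0 \<le> \<nu>" "0 < m" "0 < \<kappa>"
  shows "nV x \<le> nV z"
proof (rule ccontr)
  assume "\<not> nV x \<le> nV z"
  then have "nV z powr m < nV x powr m"
    using \<open>0 < m\<close> banach_sub_nonneg[OF V z(2)] by (intro powr_less_mono2) simp_all
  then have "\<kappa> * nV z powr m < \<kappa> * nV x powr m"
    using \<open>0 < \<kappa>\<close> by simp
  moreover have "norm (F z - yd) powr \<nu> \<le> norm (F x - yd) powr \<nu>"
    using fit \<open>0 \<le> \<nu>\<close> by (intro powr_mono2) simp_all
  ultimately have "tik F nV \<nu> m yd \<kappa> z < tik F nV \<nu> m yd \<kappa> x"
    unfolding tik_def by linarith
  moreover have "tik F nV \<nu> m yd \<kappa> x \<le> tik F nV \<nu> m yd \<kappa> z"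
    using min z unfolding is_tik_minimizer_def by blast
  ultimately show False by simp
qed

lemma tik_discrepancy_error:
  fixes F :: "'u::real_normed_vector \<Rightarrow> 'y::real_normed_vector"
    and a \<theta> t L B Cz M \<nu> m \<kappa> \<delta> CDP cU CU :: real
  assumes X: "banach_sub X nX" and V: "banach_sub V nV" and "V \<subseteq> X" "xdag \<in> X"
    and interp: "\<And>w. w \<in> V \<Longrightarrow> nX w \<le> L * nV w powr (a / (a + 1)) * norm w powr (1 / (a + 1))"
    and stab: "\<And>x. x \<in> D \<Longrightarrow> cU * norm (x - xdag) \<le> norm (F x - F xdag)
                                \<and> norm (F x - F xdag) \<le> CU * norm (x - xdag)"
    and "0 < cU" "0 < CU" "1 \<le> CDP" "0 \<le> a" "0 \<le> L" "0 \<le> \<nu>" "0 < m" "0 < \<kappa>" "0 < t"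
    and noise: "norm (yd - F xdag) \<le> \<delta>"
    and min: "is_tik_minimizer F D V nV \<nu> m yd \<kappa> x" and discrepancy: "norm (F x - yd) = CDP * \<delta>"
    and z: "z \<in> D" "z \<in> V" and z_V: "nV z \<le> B * t powr (\<theta> - 1)"
    and z_U: "CU * norm (z - xdag) \<le> (CDP - 1) * \<delta>" and z_X: "nX (z - xdag) \<le> Cz * t powr \<theta>"
    and \<delta>: "\<delta> \<le> M * t powr (a + \<theta>)"
  shows "nX (x - xdag) \<le> (L * (2 * B) powr (a / (a + 1))
           * (((CDP + 1) / cU + (CDP - 1) / CU) * M) powr (1 / (a + 1)) + Cz) * t powr \<theta>"
proof -
  define c where "c = (CDP + 1) / cU + (CDP - 1) / CU"
  have "0 \<le> c" using \<open>0 < cU\<close> \<open>0 < CU\<close> \<open>1 \<le> CDP\<close> by (simp add: c_def)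
  have x: "x \<in> D" "x \<in> V" using min unfolding is_tik_minimizer_def by auto
  have noise': "norm (F xdag - yd) \<le> \<delta>" using noise by (simp add: norm_minus_commute)
  have "norm (F z - yd) \<le> norm (F z - F xdag) + norm (F xdag - yd)"
    using norm_triangle_ineq[of "F z - F xdag" "F xdag - yd"] by simp
  also have "\<dots> \<le> CDP * \<delta>"
    using conjunct2[OF stab[OF z(1)]] z_U noise' by (simp add: algebra_simps)
  finally have fit: "norm (F z - yd) \<le> norm (F x - yd)" using discrepancy by simp
  have "nV x \<le> nV z"
    using tik_minimizer_norm_le[OF V min z fit] assms(12-14) .
  then have w_V: "nV (x - z) \<le> (2 * B) * t powr (\<theta> - 1)"
    using banach_sub_triangle_diff[OF V x(2) z(2)] z_V by linarith
  have "cU * norm (x - xdag) \<le> norm (F x - yd) + norm (yd - F xdag)"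
    using conjunct1[OF stab[OF x(1)]] norm_triangle_ineq[of "F x - yd" "yd - F xdag"] by simp
  then have "norm (x - xdag) \<le> (CDP + 1) / cU * \<delta>"
    using discrepancy noise \<open>0 < cU\<close> by (simp add: field_simps)
  moreover have "norm (z - xdag) \<le> (CDP - 1) / CU * \<delta>"
    using z_U \<open>0 < CU\<close> by (simp add: field_simps)
  ultimately have "norm (x - z) \<le> c * \<delta>"
    using norm_triangle_ineq4[of "x - xdag" "z - xdag"] by (simp add: c_def algebra_simps)
  also have "\<dots> \<le> (c * M) * t powr (a + \<theta>)"
    using mult_left_mono[OF \<delta> \<open>0 \<le> c\<close>] by (simp add: mult.assoc)
  finally have w_U: "norm (x - z) \<le> (c * M) * t powr (a + \<theta>)" .
  have w: "x - z \<in> V" using banach_sub_diff[OF V x(2) z(2)] .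
  have w_X: "nX (x - z) \<le> L * (2 * B) powr (a / (a + 1)) * (c * M) powr (1 / (a + 1)) * t powr \<theta>"
    by (rule interpolation_rate[OF _ _ _ _ interp[OF w] _ w_V _ w_U])
      (simp_all add: assms(10,11,15) banach_sub_nonneg[OF V w])
  have "z - xdag \<in> X" using banach_sub_diff[OF X _ \<open>xdag \<in> X\<close>] z(2) \<open>V \<subseteq> X\<close> by blast
  then have "nX (x - xdag) \<le> nX (x - z) + nX (z - xdag)"
    using banach_sub_triangle[OF X, of "x - z" "z - xdag"] w \<open>V \<subseteq> X\<close> by auto
  then show ?thesis using w_X z_X unfolding c_def by (simp add: algebra_simps)
qed

lemma approximants_in_domain:
  fixes C \<theta> t0 :: real
  assumes dom: "interior_pt X nX D x \<or> (\<forall>t\<in>{0<..t0}. P t x \<in> D)"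
    and "0 < t0" "0 < \<theta>" "0 \<le> C"
    and approx: "\<And>t. t \<in> {0<..t0} \<Longrightarrow> P t x \<in> X \<and> nX (P t x - x) \<le> C * t powr \<theta>"
  obtains t1 where "0 < t1" "t1 \<le> t0" "\<And>t. t \<in> {0<..t1} \<Longrightarrow> P t x \<in> D"
proof (cases "\<forall>t\<in>{0<..t0}. P t x \<in> D")
  case True
  then show ?thesis using that[of t0] \<open>0 < t0\<close> by auto
next
  case False
  with dom obtain r where "0 < r" and ball: "\<And>z. z \<in> X \<Longrightarrow> nX (z - x) < r \<Longrightarrow> z \<in> D"
    unfolding interior_pt_def by blast
  define t1 where "t1 = min t0 ((r / (C + 1)) powr (1 / \<theta>))"
  have "P t x \<in> D" if t: "t \<in> {0<..t1}" for t
  proof -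
    have t0: "t \<in> {0<..t0}" using t by (simp add: t1_def)
    have "t powr \<theta> \<le> ((r / (C + 1)) powr (1 / \<theta>)) powr \<theta>"
      using t \<open>0 < \<theta>\<close> by (intro powr_mono2) (auto simp: t1_def)
    also have "\<dots> = r / (C + 1)"
      using \<open>0 < \<theta>\<close> \<open>0 < r\<close> \<open>0 \<le> C\<close> by (simp add: powr_powr)
    finally have "C * t powr \<theta> \<le> C * (r / (C + 1))"
      using \<open>0 \<le> C\<close> by (rule mult_left_mono)
    also have "\<dots> < r"
      using \<open>0 \<le> C\<close> \<open>0 < r\<close> by (simp add: field_simps)
    finally show ?thesis using approx[OF t0] ball by force
  qed
  moreover have "0 < t1" using \<open>0 < t0\<close> \<open>0 < r\<close> \<open>0 \<le> C\<close> by (simp add: t1_def)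
  ultimately show ?thesis using that[of t1] by (simp add: t1_def)
qed

lemma tik_discrepancy_rate:
  fixes F :: "'u::real_normed_vector \<Rightarrow> 'y::real_normed_vector"
    and a \<theta> t1 L B Cz \<nu> m CDP cU CU :: real
  assumes X: "banach_sub X nX" and V: "banach_sub V nV" and "V \<subseteq> X" "xdag \<in> X"
    and interp: "\<And>w. w \<in> V \<Longrightarrow> nX w \<le> L * nV w powr (a / (a + 1)) * norm w powr (1 / (a + 1))"
    and stab: "\<And>x. x \<in> D \<Longrightarrow> cU * norm (x - xdag) \<le> norm (F x - F xdag)
                                \<and> norm (F x - F xdag) \<le> CU * norm (x - xdag)"
    and "0 < cU" "0 < CU" "1 < CDP" "0 \<le> a" "0 < \<theta>" "0 < L" "0 \<le> \<nu>" "0 < m"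
    and "0 < B" "0 \<le> Cz" "0 < t1" "t1 \<le> t0" and in_D: "\<And>t. t \<in> {0<..t1} \<Longrightarrow> z t \<in> D"
    and approximants: "\<And>t. t \<in> {0<..t0} \<Longrightarrow> z t \<in> V
           \<and> nV (z t) \<le> B * t powr (\<theta> - 1) \<and> norm (z t - xdag) \<le> B * t powr (a + \<theta>)
           \<and> nX (z t - xdag) \<le> Cz * t powr \<theta>"
  shows "\<exists>c>0. \<exists>\<delta>0>0. \<forall>\<delta> yd \<kappa> x. \<delta> \<in> {0<..\<delta>0} \<and> norm (yd - F xdag) \<le> \<delta> \<and> \<kappa> > 0
            \<and> is_tik_minimizer F D V nV \<nu> m yd \<kappa> x \<and> norm (F x - yd) = CDP * \<delta>
            \<longrightarrow> nX (x - xdag) \<le> c * \<delta> powr (\<theta> / (a + \<theta>))"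
proof -
  \<comment> \<open>For \<open>t powr (a + \<theta>) = K * \<delta>\<close> the bound \<open>B * t powr (a + \<theta>)\<close> on
    \<open>norm (z t - xdag)\<close> is exactly \<open>(CDP - 1) * \<delta> / CU\<close>.\<close>
  define K where "K = (CDP - 1) / (CU * B)"
  define C where "C = L * (2 * B) powr (a / (a + 1))
      * (((CDP + 1) / cU + (CDP - 1) / CU) * (1 / K)) powr (1 / (a + 1)) + Cz"
  have "0 < K" using \<open>0 < CU\<close> \<open>0 < B\<close> \<open>1 < CDP\<close> by (simp add: K_def)
  have "0 < a + \<theta>" using \<open>0 \<le> a\<close> \<open>0 < \<theta>\<close> by simp
  have "0 < (CDP + 1) / cU + (CDP - 1) / CU"
    using \<open>0 < cU\<close> \<open>0 < CU\<close> \<open>1 < CDP\<close> by (intro add_pos_nonneg) simp_all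
  then have "0 < C"
    using \<open>0 < K\<close> \<open>0 < L\<close> \<open>0 < B\<close> \<open>0 \<le> Cz\<close> by (simp add: C_def add_pos_nonneg)
  have "nX (x - xdag) \<le> C * K powr (\<theta> / (a + \<theta>)) * \<delta> powr (\<theta> / (a + \<theta>))"
    if \<delta>: "\<delta> \<in> {0<..t1 powr (a + \<theta>) / K}" and noise: "norm (yd - F xdag) \<le> \<delta>" and "\<kappa> > 0"
      and min: "is_tik_minimizer F D V nV \<nu> m yd \<kappa> x" and discrepancy: "norm (F x - yd) = CDP * \<delta>"
    for \<delta> yd \<kappa> x
  proof -
    define t where "t = (K * \<delta>) powr (1 / (a + \<theta>))"
    have "0 < t" using \<delta> \<open>0 < K\<close> by (simp add: t_def)
    have t_pow: "t powr (a + \<theta>) = K * \<delta>"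
      using \<delta> \<open>0 < K\<close> \<open>0 < a + \<theta>\<close> by (simp add: t_def powr_powr)
    have "t \<le> (t1 powr (a + \<theta>)) powr (1 / (a + \<theta>))"
      using \<delta> \<open>0 < K\<close> \<open>0 < a + \<theta>\<close> unfolding t_def
      by (intro powr_mono2) (simp_all add: field_simps)
    then have t: "t \<in> {0<..t1}" using \<open>0 < t\<close> \<open>0 < a + \<theta>\<close> \<open>0 < t1\<close> by (simp add: powr_powr)
    then have "t \<in> {0<..t0}" using \<open>t1 \<le> t0\<close> by simp
    then have z: "z t \<in> D" "z t \<in> V" and z_V: "nV (z t) \<le> B * t powr (\<theta> - 1)"
      and "norm (z t - xdag) \<le> B * t powr (a + \<theta>)" and z_X: "nX (z t - xdag) \<le> Cz * t powr \<theta>"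
      using approximants in_D[OF t] by auto
    then have "CU * norm (z t - xdag) \<le> CU * (B * (K * \<delta>))"
      using \<open>0 < CU\<close> t_pow by simp
    also have "\<dots> = (CDP - 1) * \<delta>" using \<open>0 < CU\<close> \<open>0 < B\<close> by (simp add: K_def)
    finally have z_U: "CU * norm (z t - xdag) \<le> (CDP - 1) * \<delta>" .
    have "\<delta> \<le> 1 / K * t powr (a + \<theta>)" using t_pow \<open>0 < K\<close> by simp
    then have "nX (x - xdag) \<le> C * t powr \<theta>"
      unfolding C_def using \<open>0 < t\<close> \<open>\<kappa> > 0\<close> \<open>0 < cU\<close> \<open>0 < CU\<close> \<open>1 < CDP\<close>
        \<open>0 \<le> a\<close> \<open>0 < L\<close> \<open>0 \<le> \<nu>\<close> \<open>0 < m\<close>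
      by (intro tik_discrepancy_error[OF X V \<open>V \<subseteq> X\<close> \<open>xdag \<in> X\<close> interp stab _ _ _ _ _ _ _ _ _
            noise min discrepancy z z_V z_U z_X]) simp_all
    also have "t powr \<theta> = K powr (\<theta> / (a + \<theta>)) * \<delta> powr (\<theta> / (a + \<theta>))"
      using \<delta> \<open>0 < K\<close> by (simp add: t_def powr_powr powr_mult)
    finally show ?thesis by (simp add: mult.assoc)
  qed
  moreover have "0 < C * K powr (\<theta> / (a + \<theta>))" "0 < t1 powr (a + \<theta>) / K"
    using \<open>0 < C\<close> \<open>0 < K\<close> \<open>0 < t1\<close> by simp_all
  ultimately show ?thesis by blast
qed

theorem theorem2:
  fixes X V :: "'u::banach set" and nX nV :: "'u \<Rightarrow> real"
    and D :: "'u set" and F :: "'u \<Rightarrow> 'y::banach" and y :: 'y and xdag :: 'u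
    and \<nu> m \<delta>max CDP cU CU t0 a \<theta> E :: real
    and XS :: "real \<Rightarrow> 'u set" and NS :: "real \<Rightarrow> 'u \<Rightarrow> real"
    and P :: "real \<Rightarrow> 'u \<Rightarrow> 'u"
  assumes
    \<comment> \<open>standing assumptions\<close>
    X_banach: "banach_sub X nX"
    and V_banach: "banach_sub V nV"
    and F_wsc: "weakly_seq_cont X nX D F"
    and D_closed: "closed_in_norm X nX D"
    and D_convex: "convex D"
    and xdag_unique: "xdag \<in> D" "F xdag = y" "\<And>x. x \<in> D \<Longrightarrow> F x = y \<Longrightarrow> x = xdag"
    and V_embed: "cont_embed V nV X nX"
    and V_strictly_finer: "\<not> (\<exists>c. \<forall>x\<in>V. nV x \<le> c * nX x)"
    and V_precompact: "\<And>c (xs :: nat \<Rightarrow> 'u). (\<forall>k. xs k \<in> V \<and> nV (xs k) powr m \<le> c) \<Longrightarrow>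
         \<exists>g x. strict_mono g \<and> x \<in> X \<and> weak_conv X nX (xs \<circ> g) x"
    and \<nu>_ge: "\<nu> \<ge> 1" and m_ge: "m \<ge> 1" and \<delta>max_pos: "\<delta>max > 0" and CDP_gt: "CDP > 1"
    and DP_exists: "\<And>\<delta> yd. \<delta> \<in> {0<..\<delta>max} \<Longrightarrow> norm (yd - y) \<le> \<delta> \<Longrightarrow>
         \<exists>\<kappa> x. \<kappa> > 0 \<and> is_tik_minimizer F D V nV \<nu> m yd \<kappa> x \<and> norm (F x - yd) = CDP * \<delta>"
    \<comment> \<open>(A1)\<close>
    and A1_U: "X \<noteq> UNIV"
    and A1_const: "0 < cU" "cU \<le> CU"
    and A1_stab: "\<And>x. x \<in> D \<Longrightarrow> cU * norm (x - xdag) \<le> norm (F x - F xdag)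
                                  \<and> norm (F x - F xdag) \<le> CU * norm (x - xdag)"
    and A1_cont: "\<exists>B. (\<exists>W. open_in_norm X nX W \<and> xdag \<in> W \<and> W \<subseteq> B) \<and> B \<subseteq> X
                     \<and> cont_on_norm nX (B \<inter> D) F"
    \<comment> \<open>(A2)\<close>
    and t0_pos: "t0 > 0"
    and P_bounded: "\<And>t. t \<in> {0<..t0} \<Longrightarrow> bounded_linear (P t)"
    and A2_i: "cont_embed X nX UNIV norm"
    and A2_ii_banach: "\<And>s. s \<in> {0..1} \<Longrightarrow> banach_sub (XS s) (NS s)"
    and A2_ii_0: "XS 0 = X" "\<And>x. x \<in> X \<Longrightarrow> NS 0 x = nX x"
    and A2_ii_1: "XS 1 = V" "\<And>x. x \<in> V \<Longrightarrow> NS 1 x = nV x"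
    and A2_ii_embed: "\<And>s t. 0 \<le> t \<Longrightarrow> t \<le> s \<Longrightarrow> s \<le> 1 \<Longrightarrow> cont_embed (XS s) (NS s) (XS t) (NS t)"
    and a_nonneg: "a \<ge> 0"
    and A2_iii: "\<And>s r. s \<in> {0<..1} \<Longrightarrow> r \<in> {0..<s} \<Longrightarrow>
         \<exists>L>0. \<forall>x\<in>XS s. NS r x \<le> L * NS s x powr ((r + a) / (a + s)) * norm x powr ((s - r) / (a + s))"
    and A2_iv_inv: "\<And>s t. s \<in> {0..1} \<Longrightarrow> t \<in> {0<..t0} \<Longrightarrow> P t ` XS s \<subseteq> XS s"
    and A2_iv_bdd: "\<And>s. s \<in> {0..1} \<Longrightarrow>
         bdd_above {NS s (P t x) | t x. t \<in> {0<..t0} \<and> x \<in> XS s \<and> NS s x \<le> 1}"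
    and A2_iv_cont: "\<And>x t. x \<in> X \<Longrightarrow> t \<in> {0<..t0} \<Longrightarrow>
         ((\<lambda>\<tau>. nX (P \<tau> x - P t x)) \<longlongrightarrow> 0) (at t within {0<..t0})"
    and A2_v: "\<And>s. s \<in> {0<..<1} \<Longrightarrow>
         \<exists>CProj \<ge> CP_const XS NS P t0 s + 1. \<forall>t\<in>{0<..t0}. \<forall>x\<in>XS s.
            norm (P t x - x) \<le> CProj * t powr (a + s) * NS s x
            \<and> P t x \<in> V \<and> nV (P t x) \<le> CProj * t powr (s - 1) * NS s x"
    \<comment> \<open>(A3)\<close>
    and A3_theta: "\<theta> \<in> {0<..<1}" and E_pos: "E > 0"
    and A3_src: "xdag \<in> XS \<theta>" "NS \<theta> xdag \<le> E"
    and A3_dom: "interior_pt X nX D xdag \<or> (\<forall>t\<in>{0<..t0}. P t xdag \<in> D)"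
  shows "\<exists>c>0. \<exists>\<delta>0>0. \<forall>\<delta> yd \<kappa> x. \<delta> \<in> {0<..min \<delta>0 \<delta>max} \<and> norm (yd - y) \<le> \<delta> \<and> \<kappa> > 0
            \<and> is_tik_minimizer F D V nV \<nu> m yd \<kappa> x \<and> norm (F x - yd) = CDP * \<delta>
            \<longrightarrow> nX (x - xdag) \<le> c * \<delta> powr (\<theta> / (a + \<theta>))"
proof -
  have \<theta>: "0 < \<theta>" "\<theta> \<in> {0..1}" using A3_theta by auto
  have "V \<subseteq> X" using V_embed unfolding cont_embed_def by blast
  have "XS \<theta> \<subseteq> X" using A2_ii_embed[of 0 \<theta>] \<theta> A2_ii_0(1) unfolding cont_embed_def by simp
  have "xdag \<in> X" using D_closed xdag_unique(1) unfolding closed_in_norm_def by blast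
  have "\<exists>L>0. \<forall>w\<in>XS \<theta>. nX w \<le> L * NS \<theta> w powr (a / (a + \<theta>)) * norm w powr (\<theta> / (a + \<theta>))"
    using A2_iii[of \<theta> 0] \<theta> A2_ii_0(2) \<open>XS \<theta> \<subseteq> X\<close> by fastforce
  then obtain B Cz where "0 < B" "0 \<le> Cz" and approximants: "\<And>t. t \<in> {0<..t0} \<Longrightarrow>
      P t xdag \<in> V \<and> nV (P t xdag) \<le> B * t powr (\<theta> - 1)
      \<and> norm (P t xdag - xdag) \<le> B * t powr (a + \<theta>) \<and> nX (P t xdag - xdag) \<le> Cz * t powr \<theta>"
    using source_approximants[where P = P, OF \<theta>(1) a_nonneg t0_pos E_pos A2_ii_banach[OF \<theta>(2)]
        bounded_linear.linear[OF P_bounded] A2_iv_inv[OF \<theta>(2)] A2_iv_bdd[OF \<theta>(2)] _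
        A2_v[OF A3_theta] A3_src]
    by blast
  have "\<And>t. t \<in> {0<..t0} \<Longrightarrow> P t xdag \<in> X \<and> nX (P t xdag - xdag) \<le> Cz * t powr \<theta>"
    using approximants \<open>V \<subseteq> X\<close> by blast
  then obtain t1 where t1: "0 < t1" "t1 \<le> t0" "\<And>t. t \<in> {0<..t1} \<Longrightarrow> P t xdag \<in> D"
    using approximants_in_domain[where P = P, OF A3_dom t0_pos \<theta>(1) \<open>0 \<le> Cz\<close>] by blast
  obtain L1 where L1: "0 < L1"
    "\<And>w. w \<in> V \<Longrightarrow> nX w \<le> L1 * nV w powr (a / (a + 1)) * norm w powr (1 / (a + 1))"
    using A2_iii[of 1 0] A2_ii_1 A2_ii_0(2) \<open>V \<subseteq> X\<close> by fastforce
  have pos: "0 < CU" "0 \<le> \<nu>" "0 < m" using A1_const \<nu>_ge m_ge by simp_all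
  obtain c \<delta>0 where "0 < c" "0 < \<delta>0" and rate: "\<forall>\<delta> yd \<kappa> x. \<delta> \<in> {0<..\<delta>0}
      \<and> norm (yd - F xdag) \<le> \<delta> \<and> \<kappa> > 0 \<and> is_tik_minimizer F D V nV \<nu> m yd \<kappa> x
      \<and> norm (F x - yd) = CDP * \<delta> \<longrightarrow> nX (x - xdag) \<le> c * \<delta> powr (\<theta> / (a + \<theta>))"
    using tik_discrepancy_rate[where F = F and z = "\<lambda>t. P t xdag", OF X_banach V_banach
        \<open>V \<subseteq> X\<close> \<open>xdag \<in> X\<close> L1(2) A1_stab A1_const(1) pos(1) CDP_gt a_nonneg \<theta>(1)
        L1(1) pos(2,3) \<open>0 < B\<close> \<open>0 \<le> Cz\<close> t1 approximants]
    by blast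
  have "nX (x - xdag) \<le> c * \<delta> powr (\<theta> / (a + \<theta>))"
    if "\<delta> \<in> {0<..min \<delta>0 \<delta>max} \<and> norm (yd - y) \<le> \<delta> \<and> \<kappa> > 0
      \<and> is_tik_minimizer F D V nV \<nu> m yd \<kappa> x \<and> norm (F x - yd) = CDP * \<delta>" for \<delta> yd \<kappa> x
    using that xdag_unique(2) by (intro rate[rule_format, of \<delta> yd \<kappa> x]) simp
  then show ?thesis using \<open>0 < c\<close> \<open>0 < \<delta>0\<close> by blast
qed

end
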